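(* Let $G$ be a non-regular simple graph on $n$ vertices, and let $u,v$ be vertices of $G$ with $d_G(u)<d_G(v)$. Let $R:=V(G)\setminus\{u,v\}$, $X:=N(u)\setminus N[v]$, and $Z:=\{w\in R: w\notin N(u)\cup N(v)\}$. If $F_k(G)$ is regular for some integer $k$ with $2\le k\le n-2$, then $X=\emptyset$ and $Z=\emptyset$.
   Context: For a simple graph $G=(V,E)$ on $n$ vertices and an integer $1\le k<n$, the $k$-token graph $F_k(G)$ is the graph whose vertices are all $k$-element subsets of $V$, two such subsets $A,B$ being adjacent whenever their symmetric difference $A\triangle B$ is a pair $\{a,b\}$ with $a$ adjacent to $b$ in $G$. $N(x)$ is the set of neighbors of $x$ in $G$, $N[x]=N(x)\cup\{x\}$, and $d_G(x)=|N(x)|$. *)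

theory Defs
  imports Main
begin

definition simple_graph :: "'a set \<Rightarrow> ('a \<Rightarrow> 'a \<Rightarrow> bool) \<Rightarrow> bool" where
  "simple_graph V E \<longleftrightarrow> finite V \<and> (\<forall>x y. E x y \<longrightarrow> x \<in> V \<and> y \<in> V)
     \<and> (\<forall>x y. E x y \<longrightarrow> E y x) \<and> (\<forall>x. \<not> E x x)"

definition nbhd :: "'a set \<Rightarrow> ('a \<Rightarrow> 'a \<Rightarrow> bool) \<Rightarrow> 'a \<Rightarrow> 'a set" where
  "nbhd V E x = {y \<in> V. E x y}"

definition cnbhd :: "'a set \<Rightarrow> ('a \<Rightarrow> 'a \<Rightarrow> bool) \<Rightarrow> 'a \<Rightarrow> 'a set" where
  "cnbhd V E x = insert x (nbhd V E x)"

definition degree :: "'a set \<Rightarrow> ('a \<Rightarrow> 'a \<Rightarrow> bool) \<Rightarrow> 'a \<Rightarrow> nat" where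
  "degree V E x = card (nbhd V E x)"

definition regular_graph :: "'a set \<Rightarrow> ('a \<Rightarrow> 'a \<Rightarrow> bool) \<Rightarrow> bool" where
  "regular_graph V E \<longleftrightarrow> (\<exists>r. \<forall>x\<in>V. degree V E x = r)"

definition token_vertices :: "'a set \<Rightarrow> nat \<Rightarrow> 'a set set" where
  "token_vertices V k = {A. A \<subseteq> V \<and> card A = k}"

definition token_adj :: "('a \<Rightarrow> 'a \<Rightarrow> bool) \<Rightarrow> 'a set \<Rightarrow> 'a set \<Rightarrow> bool" where
  "token_adj E A B \<longleftrightarrow> (\<exists>a b. A \<union> B - A \<inter> B = {a, b} \<and> a \<noteq> b \<and> E a b)"

definition token_graph_regular :: "'a set \<Rightarrow> ('a \<Rightarrow> 'a \<Rightarrow> bool) \<Rightarrow> nat \<Rightarrow> bool" where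
  "token_graph_regular V E k \<longleftrightarrow>
     regular_graph (token_vertices V k) (token_adj E)"

end

theory Submission
  imports Defs
begin

text \<open>A neighbour of a \<open>k\<close>-set \<open>A\<close> in \<open>F\<^sub>k(G)\<close> is obtained by moving one token along an edge
  leaving \<open>A\<close>, so \<open>A\<close> has degree \<open>\<Sum>\<^sub>a\<^sub>\<in>\<^sub>A |N(a) - A|\<close>. For a \<open>(k-1)\<close>-set \<open>S \<subseteq> R\<close>, comparing the
  degrees of \<open>S \<union> {u}\<close> and \<open>S \<union> {v}\<close> gives
  \<open>2 \<Sum>\<^sub>w\<^sub>\<in>\<^sub>S ([v ~ w] - [u ~ w]) = d(v) - d(u)\<close>. Since \<open>|R| \<ge> k\<close>, exchanging a single element
  of \<open>S\<close> shows that \<open>[v ~ w] - [u ~ w]\<close> is the same for all \<open>w \<in> R\<close>, and as \<open>d(v) > d(u)\<close> this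
  common value is \<open>1\<close>: every \<open>w \<in> R\<close> is adjacent to \<open>v\<close> but not to \<open>u\<close>.\<close>

lemma nbhd_token_graph:
  assumes sg: "simple_graph V E" and A: "A \<subseteq> V" "card A = k"
  shows "nbhd (token_vertices V k) (token_adj E) A
       = (\<lambda>(a, b). insert b (A - {a})) ` {(a, b). a \<in> A \<and> b \<in> V - A \<and> E a b}"
proof
  have fV: "finite V" and sym: "\<And>x y. E x y \<Longrightarrow> E y x"
    using sg by (auto simp: simple_graph_def)
  have fA: "finite A" using fV A(1) finite_subset by blast
  show "nbhd (token_vertices V k) (token_adj E) A
       \<subseteq> (\<lambda>(a, b). insert b (A - {a})) ` {(a, b). a \<in> A \<and> b \<in> V - A \<and> E a b}"
  proof
    fix B assume "B \<in> nbhd (token_vertices V k) (token_adj E) A"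
    then obtain a b where B: "B \<subseteq> V" "card B = k"
      and ab: "A \<union> B - A \<inter> B = {a, b}" "a \<noteq> b" "E a b"
      by (auto simp: nbhd_def token_vertices_def token_adj_def)
    have fB: "finite B" using fV B(1) finite_subset by blast
    have same_card: "card (A - B) = card (B - A)"
      using card_Diff_subset_Int[of A B] card_Diff_subset_Int[of B A] fA fB A B
      by (simp add: Int_commute)
    have split: "(A - B) \<union> (B - A) = {a, b}" using ab by blast
    have "card (A - B) + card (B - A) = 2"
      using card_Un_disjoint[of "A - B" "B - A"] fA fB split ab(2) by (simp add: Diff_Int_distrib2)
    then have "card (A - B) = Suc 0" "card (B - A) = Suc 0" using same_card by auto
    then obtain x y where xy: "A - B = {x}" "B - A = {y}" by (metis card_1_singleton_iff)
    have "E x y" using split xy ab sym by (auto simp: doubleton_eq_iff)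
    moreover have "B = insert y (A - {x})" using xy by blast
    ultimately show "B \<in> (\<lambda>(a, b). insert b (A - {a})) ` {(a, b). a \<in> A \<and> b \<in> V - A \<and> E a b}"
      using xy B by force
  qed
  show "(\<lambda>(a, b). insert b (A - {a})) ` {(a, b). a \<in> A \<and> b \<in> V - A \<and> E a b}
       \<subseteq> nbhd (token_vertices V k) (token_adj E) A"
  proof clarify
    fix a b assume ab: "a \<in> A" "b \<in> V" "b \<notin> A" "E a b"
    have "card (insert b (A - {a})) = k"
      using fA ab A card_Suc_Diff1[of A a] by simp
    moreover have "A \<union> insert b (A - {a}) - A \<inter> insert b (A - {a}) = {a, b}" using ab by blast
    ultimately show "insert b (A - {a}) \<in> nbhd (token_vertices V k) (token_adj E) A"
      using ab A unfolding nbhd_def token_vertices_def token_adj_def by blast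
  qed
qed

lemma degree_token_graph:
  assumes sg: "simple_graph V E" and A: "A \<subseteq> V" "card A = k"
  shows "degree (token_vertices V k) (token_adj E) A = (\<Sum>a\<in>A. card (nbhd V E a - A))"
proof -
  have fV: "finite V" using sg by (auto simp: simple_graph_def)
  have fA: "finite A" using fV A(1) finite_subset by blast
  let ?moves = "{(a, b). a \<in> A \<and> b \<in> V - A \<and> E a b}"
  have "inj_on (\<lambda>(a, b). insert b (A - {a})) ?moves"
  proof (rule inj_onI, clarify)
    fix a b a' b' assume "a \<in> A" "b \<notin> A" "a' \<in> A" "b' \<notin> A"
      and eq: "insert b (A - {a}) = insert b' (A - {a'})"
    then show "a = a' \<and> b = b'" by (metis Diff_iff insertE insertI1 insertI2 singletonD)
  qed
  moreover have "?moves = Sigma A (\<lambda>a. nbhd V E a - A)" by (auto simp: nbhd_def)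
  ultimately show ?thesis
    using fA fV nbhd_token_graph[OF assms] by (simp add: degree_def card_image nbhd_def)
qed

lemma degree_token_graph_insert:
  assumes sg: "simple_graph V E" and S: "S \<subseteq> V" and x: "x \<in> V" "x \<notin> S"
    and k: "card (insert x S) = k"
  shows "int (degree (token_vertices V k) (token_adj E) (insert x S))
       = (\<Sum>a\<in>S. int (card (nbhd V E a - S))) + int (degree V E x)
         - 2 * (\<Sum>w\<in>S. of_bool (E x w))"
proof -
  have fV: "finite V" and sym: "\<And>x y. E x y \<Longrightarrow> E y x" and irr: "\<And>x. \<not> E x x"
    using sg by (auto simp: simple_graph_def)
  have fS: "finite S" using fV S finite_subset by blast
  have fN: "\<And>a. finite (nbhd V E a)" using fV by (simp add: nbhd_def)
  have own: "int (card (nbhd V E x - insert x S))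
      = int (degree V E x) - (\<Sum>w\<in>S. of_bool (E x w))"
  proof -
    have "nbhd V E x - insert x S = nbhd V E x - S" using irr by (auto simp: nbhd_def)
    moreover have "card (nbhd V E x) = card (nbhd V E x \<inter> S) + card (nbhd V E x - S)"
      by (rule card_Int_Diff[OF fN])
    moreover have "(\<Sum>w\<in>S. of_bool (E x w)) = int (card (nbhd V E x \<inter> S))"
    proof -
      have "S \<inter> {w. E x w} = nbhd V E x \<inter> S" using S by (auto simp: nbhd_def)
      with fS show ?thesis by simp
    qed
    ultimately show ?thesis unfolding degree_def by simp
  qed
  have other: "int (card (nbhd V E a - insert x S)) = int (card (nbhd V E a - S)) - of_bool (E x a)"
    if "a \<in> S" for a
  proof -
    have split: "nbhd V E a - insert x S = (nbhd V E a - S) - {x}" by blast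
    have mem: "x \<in> nbhd V E a - S \<longleftrightarrow> E x a" using x sym by (auto simp: nbhd_def)
    show ?thesis
    proof (cases "E x a")
      case True
      then have "card (nbhd V E a - S) = Suc (card (nbhd V E a - insert x S))"
        unfolding split using mem fN[of a] by (intro card_Suc_Diff1[symmetric]) auto
      with True show ?thesis by simp
    next
      case False
      then show ?thesis unfolding split using mem by simp
    qed
  qed
  have "int (degree (token_vertices V k) (token_adj E) (insert x S))
      = int (card (nbhd V E x - insert x S)) + (\<Sum>a\<in>S. int (card (nbhd V E a - insert x S)))"
    using degree_token_graph[OF sg _ k] S x fS by simp
  also have "\<dots> = int (degree V E x) - (\<Sum>w\<in>S. of_bool (E x w))
      + ((\<Sum>a\<in>S. int (card (nbhd V E a - S))) - (\<Sum>a\<in>S. of_bool (E x a)))"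
    using own other by (simp add: sum_subtractf)
  finally show ?thesis by linarith
qed

lemma token_regular_degree_balance:
  assumes sg: "simple_graph V E" and reg: "token_graph_regular V E k"
    and u: "u \<in> V" and v: "v \<in> V"
    and S: "S \<subseteq> V - {u, v}" "card S = k - 1" and k: "1 \<le> k"
  shows "(\<Sum>w\<in>S. 2 * (of_bool (E v w) - of_bool (E u w)))
       = int (degree V E v) - int (degree V E u)"
proof -
  have fS: "finite S" using sg S(1) finite_subset by (auto simp: simple_graph_def)
  obtain r where r: "\<And>A. A \<in> token_vertices V k \<Longrightarrow> degree (token_vertices V k) (token_adj E) A = r"
    using reg by (auto simp: token_graph_regular_def regular_graph_def)
  have SV: "S \<subseteq> V" and notin: "u \<notin> S" "v \<notin> S" using S by auto
  have cards: "card (insert u S) = k" "card (insert v S) = k" using notin fS S k by auto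
  then have "insert u S \<in> token_vertices V k" "insert v S \<in> token_vertices V k"
    using SV u v by (auto simp: token_vertices_def)
  then have "degree (token_vertices V k) (token_adj E) (insert u S) = r"
    "degree (token_vertices V k) (token_adj E) (insert v S) = r"
    by (simp_all add: r)
  moreover note degree_token_graph_insert[OF sg SV u notin(1) cards(1)]
    degree_token_graph_insert[OF sg SV v notin(2) cards(2)]
  moreover have "(\<Sum>w\<in>S. 2 * (of_bool (E v w) - of_bool (E u w)))
      = 2 * (\<Sum>w\<in>S. of_bool (E v w)) - 2 * (\<Sum>w\<in>S. of_bool (E u w) :: int)"
    by (simp add: sum_subtractf sum_distrib_left)
  ultimately show ?thesis by linarith
qed

lemma eq_if_subset_sums_eq:
  fixes g :: "'a \<Rightarrow> 'b::cancel_comm_monoid_add"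
  assumes R: "finite R" "0 < m" "m < card R"
    and sums: "\<And>S. S \<subseteq> R \<Longrightarrow> card S = m \<Longrightarrow> sum g S = c"
    and w: "w \<in> R" "w' \<in> R"
  shows "g w = g w'"
proof (cases "w = w'")
  case False
  have "m - 1 \<le> card (R - {w, w'})" using R w False by (simp add: card_Diff_subset)
  then obtain T where T: "T \<subseteq> R - {w, w'}" "card T = m - 1" "finite T"
    by (rule obtain_subset_with_card_n)
  have "g x + sum g T = c" if "x \<in> {w, w'}" for x
  proof -
    have "x \<in> R" "x \<notin> T" using that T w by auto
    then show ?thesis using sums[of "insert x T"] T R(2) by auto
  qed
  then show ?thesis by (metis add_right_cancel insertI1 insertI2 singletonI)
qed simp

lemma token_regular_adjacent_only_to_larger:
  assumes sg: "simple_graph V E" and reg: "token_graph_regular V E k"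
    and u: "u \<in> V" and v: "v \<in> V" and less: "degree V E u < degree V E v"
    and k: "2 \<le> k" "k \<le> card V - 2"
    and w: "w \<in> V - {u, v}"
  shows "E v w \<and> \<not> E u w"
proof -
  define R where "R = V - {u, v}"
  define h where "h y = 2 * (of_bool (E v y) - of_bool (E u y) :: int)" for y
  define D where "D = int (degree V E v) - int (degree V E u)"
  have fR: "finite R" using sg by (simp add: R_def simple_graph_def)
  have "u \<noteq> v" using less by auto
  then have cR: "card R = card V - 2" using u v sg by (simp add: R_def simple_graph_def card_Diff_subset)
  have sums: "sum h S = D" if "S \<subseteq> R" "card S = k - 1" for S
    using token_regular_degree_balance[OF sg reg u v] that k by (simp add: R_def h_def D_def)
  have const: "h x = h w" if "x \<in> R" for x
    by (rule eq_if_subset_sums_eq[OF fR _ _ sums]) (use k cR that w in \<open>auto simp: R_def\<close>)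
  have "k - 2 \<le> card (R - {w})" using w fR cR k by (simp add: R_def)
  then obtain T where T: "T \<subseteq> R - {w}" "card T = k - 2" "finite T"
    by (rule obtain_subset_with_card_n)
  have "w \<in> R" "w \<notin> T" using w T by (auto simp: R_def)
  then have "card (insert w T) = k - 1" and sub: "insert w T \<subseteq> R" using T k by auto
  moreover have "sum h (insert w T) = (\<Sum>_\<in>insert w T. h w)"
    using sub by (intro sum.cong refl const) blast
  ultimately have "int (k - 1) * h w = D" using sums[OF sub] by simp
  moreover have "D > 0" using less by (simp add: D_def)
  moreover have "int (k - 1) > 0" using k by simp
  ultimately have "h w > 0" by (metis zero_less_mult_pos)
  then show ?thesis by (auto simp: h_def)
qed

theorem corollary2:
  fixes V :: "'a set" and E :: "'a \<Rightarrow> 'a \<Rightarrow> bool" and u v :: 'a and k :: nat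
  assumes "simple_graph V E"
    and "\<not> regular_graph V E"
    and "u \<in> V" and "v \<in> V"
    and "degree V E u < degree V E v"
    and "2 \<le> k" and "k \<le> card V - 2"
    and "token_graph_regular V E k"
  shows "nbhd V E u - cnbhd V E v = {}
       \<and> {w \<in> V - {u, v}. w \<notin> nbhd V E u \<union> nbhd V E v} = {}"
proof -
  have only_v: "E v w \<and> \<not> E u w" if "w \<in> V - {u, v}" for w
    using token_regular_adjacent_only_to_larger[OF assms(1,8,3,4,5,6,7) that] .
  have "\<not> E u u" using assms(1) by (simp add: simple_graph_def)
  then have "nbhd V E u - cnbhd V E v = {}"
    using only_v by (auto simp: nbhd_def cnbhd_def)
  moreover have "{w \<in> V - {u, v}. w \<notin> nbhd V E u \<union> nbhd V E v} = {}"
    using only_v by (auto simp: nbhd_def)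
  ultimately show ?thesis ..
qed

end
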